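(* For any $\mathbf z\in\mathrm{Sym}^k\mathbb R$, there is a unique decomposition $\mathbf z=\mathbf z_1+\dots+\mathbf z_m$ such that each $\mathbf z_i$ is well contained in $B_{\mathbf z_i}$, and the boxes $B_{\mathbf z_i}$ are pairwise disjoint and ordered $B_{\mathbf z_1}<B_{\mathbf z_2}<\dots<B_{\mathbf z_m}$.
   Context: Fix $b>0$. For $x\in\mathbb R$ and $k\ge1$, $B_k(x)=[x-kb,x+kb]$. For a nonempty $\mathbf z\in\mathrm{Sym}^n\mathbb R$ (unordered tuple with multiplicity, $|\mathbf z|=n$, $+$ union with multiplicity), $c(\mathbf z)$ is the average of its points and $B_{\mathbf z}=B_{|\mathbf z|}(c(\mathbf z))$. Writing $\mathbf z=(x_1\le\dots\le x_n)$, a consecutive subset is $\{x_p,x_{p+1},\dots,x_q\}$. $\mathbf z$ is well contained in $B_{\mathbf z}$ if $B_{\mathbf z'}\subset B_{\mathbf z}$ for every consecutive subset $\mathbf z'\subset\mathbf z$. For intervals, $B<B'$ means every point of $B$ is less than every point of $B'$. *)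

theory Defs
  imports Complex_Main "HOL-Library.Multiset"
begin

text \<open>Points of Sym^n R are finite multisets of reals; + is multiset union.\<close>

definition center :: "real multiset \<Rightarrow> real" where
  "center z = sum_mset z / real (size z)"

definition Bk :: "real \<Rightarrow> nat \<Rightarrow> real \<Rightarrow> real set" where
  "Bk b k x = {x - real k * b .. x + real k * b}"

definition Bz :: "real \<Rightarrow> real multiset \<Rightarrow> real set" where
  "Bz b z = Bk b (size z) (center z)"

text \<open>Consecutive subsets {x_p,...,x_q} (p \<le> q) of z = (x_1 \<le> ... \<le> x_n).\<close>
definition consecutive_subsets :: "real multiset \<Rightarrow> real multiset set" where
  "consecutive_subsets z =
     {mset (take (q - p + 1) (drop p (sorted_list_of_multiset z))) | p q. p \<le> q \<and> q < size z}"

definition well_contained :: "real \<Rightarrow> real multiset \<Rightarrow> bool" where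
  "well_contained b z \<longleftrightarrow> (\<forall>z' \<in> consecutive_subsets z. Bz b z' \<subseteq> Bz b z)"

definition interval_less :: "real set \<Rightarrow> real set \<Rightarrow> bool" where
  "interval_less B B' \<longleftrightarrow> (\<forall>x\<in>B. \<forall>y\<in>B'. x < y)"

end

theory Submission
  imports Defs "HOL-Library.Sublist"
begin

(* Sort the points: a decomposition becomes a splitting of the sorted list into consecutive
   blocks w, with box [mean w - |w| b, mean w + |w| b].
   Existence: the mean of u @ v is the weighted mean of the means of u and v, and when the
   boxes of two adjacent well contained blocks u, v overlap, the box of u @ v contains both boxes
   and the box of every piece of u @ v straddling the junction.  Hence u @ v is again well
   contained, and merging neighbours with overlapping boxes, starting from singletons, ends with
   a decomposition.
   Uniqueness: in a decomposition, the box of an initial segment has its left end no smaller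
   than that of the first block, and strictly larger once the segment is longer than the first
   block.  A well contained initial segment contains the first block, so its left end is no
   larger; hence the first blocks of two decompositions have the same length. *)

lemma weighted_mean_eq:
  fixes n1 n2 m1 m2 :: real
  assumes "0 < n1 + n2"
  shows "(n1 * m1 + n2 * m2) / (n1 + n2) = m1 + n2 * ((m2 - m1) / (n1 + n2))"
    and "(n1 * m1 + n2 * m2) / (n1 + n2) = m2 - n1 * ((m2 - m1) / (n1 + n2))"
  using assms by (simp_all add: field_simps)

lemma weighted_mean_box_covers:
  fixes n1 n2 m1 m2 b :: real
  assumes "0 < n1" "0 < n2" "m1 \<le> m2" "m2 - n2 * b \<le> m1 + n1 * b"
  defines "m \<equiv> (n1 * m1 + n2 * m2) / (n1 + n2)"
  shows "m - (n1 + n2) * b \<le> m1 - n1 * b" "m - (n1 + n2) * b \<le> m2 - n2 * b"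
    and "m1 + n1 * b \<le> m + (n1 + n2) * b" "m2 + n2 * b \<le> m + (n1 + n2) * b"
proof -
  define e where "e = (m2 - m1) / (n1 + n2)"
  have "0 \<le> e" "e \<le> b"
    using assms(1-4) unfolding e_def by (simp_all add: field_simps)
  then have "n1 * e \<le> n1 * b" "n2 * e \<le> n2 * b" "0 \<le> n1 * e" "0 \<le> n2 * e"
    using assms(1,2) by simp_all
  moreover have "m = m1 + n2 * e" "m = m2 - n1 * e"
    using weighted_mean_eq assms(1,2) unfolding m_def e_def by simp_all
  ultimately show "m - (n1 + n2) * b \<le> m1 - n1 * b" "m - (n1 + n2) * b \<le> m2 - n2 * b"
    and "m1 + n1 * b \<le> m + (n1 + n2) * b" "m2 + n2 * b \<le> m + (n1 + n2) * b"
    by (simp_all add: algebra_simps)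
qed

lemma weighted_mean_box_lower_gt:
  fixes n1 n2 m1 m2 b :: real
  assumes "0 < n1" "0 < n2" "m1 + n1 * b < m2 - n2 * b"
  shows "m1 - n1 * b < (n1 * m1 + n2 * m2) / (n1 + n2) - (n1 + n2) * b"
proof -
  define e where "e = (m2 - m1) / (n1 + n2)"
  have "b < e" using assms unfolding e_def by (simp add: field_simps)
  then have "n2 * b < n2 * e" using assms(2) by simp
  moreover have "(n1 * m1 + n2 * m2) / (n1 + n2) = m1 + n2 * e"
    using weighted_mean_eq assms(1,2) unfolding e_def by simp
  ultimately show ?thesis by (simp add: algebra_simps)
qed

lemma weighted_mean_box_lower_mono:
  fixes n1 n2 m1 m2 na nb ma mb b :: real
  assumes "0 < na" "na \<le> n1" "0 < nb" "nb \<le> n2"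
    and "m1 \<le> m2" "m2 - n2 * b \<le> m1 + n1 * b"
    and "m1 - n1 * b \<le> ma - na * b" "m2 - n2 * b \<le> mb - nb * b"
  shows "(n1 * m1 + n2 * m2) / (n1 + n2) - (n1 + n2) * b
           \<le> (na * ma + nb * mb) / (na + nb) - (na + nb) * b"
proof -
  define e where "e = (m2 - m1) / (n1 + n2)"
  define t where "t = (n1 * m1 + n2 * m2) / (n1 + n2) - (n1 + n2) * b"
  have "0 \<le> e" "e \<le> b"
    using assms unfolding e_def by (simp_all add: field_simps)
  have "t + n2 * (b - e) = m1 - n1 * b" "t + n1 * (b + e) = m2 - n2 * b"
    using weighted_mean_eq[of n1 n2] assms(1-4) unfolding t_def e_def by (simp_all add: algebra_simps)
  moreover have "nb * (b - e) \<le> n2 * (b - e)" "na * (b + e) \<le> n1 * (b + e)"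
    using assms(2,4) \<open>0 \<le> e\<close> \<open>e \<le> b\<close> by (simp_all add: mult_right_mono)
  ultimately have "t + nb * (b - e) \<le> ma - na * b" "t + na * (b + e) \<le> mb - nb * b"
    using assms(7,8) by linarith+
  then have "na * (t + nb * (b - e)) \<le> na * (ma - na * b)"
    and "nb * (t + na * (b + e)) \<le> nb * (mb - nb * b)"
    using assms(1,3) by (simp_all add: mult_left_mono)
  then have "(na + nb) * t + 2 * na * nb * b \<le> na * (ma - na * b) + nb * (mb - nb * b)"
    by (simp add: algebra_simps)
  then show ?thesis unfolding t_def[symmetric] using assms(1,3) by (simp add: field_simps)
qed

lemma weighted_mean_box_upper_mono:
  fixes n1 n2 m1 m2 na nb ma mb b :: real
  assumes "0 < na" "na \<le> n1" "0 < nb" "nb \<le> n2"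
    and "m1 \<le> m2" "m2 - n2 * b \<le> m1 + n1 * b"
    and "ma + na * b \<le> m1 + n1 * b" "mb + nb * b \<le> m2 + n2 * b"
  shows "(na * ma + nb * mb) / (na + nb) + (na + nb) * b
           \<le> (n1 * m1 + n2 * m2) / (n1 + n2) + (n1 + n2) * b"
  \<comment> \<open>mirror image of the lower bound under x \<mapsto> -x, which swaps the two parts\<close>
proof -
  have "- ((n1 * m1 + n2 * m2) / (n1 + n2)) - (n1 + n2) * b
          \<le> - ((na * ma + nb * mb) / (na + nb)) - (na + nb) * b"
    using weighted_mean_box_lower_mono[of nb n2 na n1 "- m2" "- m1" b "- mb" "- ma"] assms
    by (simp add: ac_simps minus_divide_left)
  then show ?thesis
    by linarith
qed

definition mean :: "real list \<Rightarrow> real" where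
  "mean w = sum_list w / real (length w)"

definition box_lo :: "real \<Rightarrow> real list \<Rightarrow> real" where
  "box_lo b w = mean w - real (length w) * b"

definition box_hi :: "real \<Rightarrow> real list \<Rightarrow> real" where
  "box_hi b w = mean w + real (length w) * b"

lemma Bz_mset: "Bz b (mset w) = {box_lo b w .. box_hi b w}"
  by (simp add: Bz_def Bk_def center_def box_lo_def box_hi_def mean_def sum_mset_sum_list)

lemma mean_append:
  "mean (u @ v) = (length u * mean u + length v * mean v) / (length u + length v)"
  by (simp add: mean_def)

lemma box_lo_le_box_hi: "0 \<le> b \<Longrightarrow> box_lo b w \<le> box_hi b w"
  by (simp add: box_lo_def box_hi_def)

lemma box_lo_append:
  "box_lo b (u @ v) = (length u * mean u + length v * mean v) / (real (length u) + length v)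
     - (real (length u) + length v) * b"
  by (simp add: box_lo_def mean_append)

lemma box_hi_append:
  "box_hi b (u @ v) = (length u * mean u + length v * mean v) / (real (length u) + length v)
     + (real (length u) + length v) * b"
  by (simp add: box_hi_def mean_append)

lemma mean_le_mean:
  assumes "u \<noteq> []" "v \<noteq> []" "\<forall>x\<in>set u. \<forall>y\<in>set v. x \<le> y"
  shows "mean u \<le> mean v"
proof -
  have "sum_list u * length v = (\<Sum>x\<leftarrow>u. \<Sum>y\<leftarrow>v. x)"
    by (simp add: sum_list_triv sum_list_const_mult[of _ "\<lambda>x. x", simplified])
  also have "\<dots> \<le> (\<Sum>x\<leftarrow>u. \<Sum>y\<leftarrow>v. y)"
    using assms(3) by (intro sum_list_mono) auto
  also have "\<dots> = length u * sum_list v"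
    by (simp add: sum_list_triv)
  finally show ?thesis
    using assms(1,2) by (simp add: mean_def field_simps)
qed

definition well_contained_list :: "real \<Rightarrow> real list \<Rightarrow> bool" where
  "well_contained_list b w \<longleftrightarrow> w \<noteq> [] \<and>
     (\<forall>s. sublist s w \<and> s \<noteq> [] \<longrightarrow> box_lo b w \<le> box_lo b s \<and> box_hi b s \<le> box_hi b w)"

lemma well_contained_list_singleton: "well_contained_list b [x]"
  by (auto simp: well_contained_list_def sublist_Cons_right prefix_Cons)

lemma well_contained_list_sublistD:
  "well_contained_list b w \<Longrightarrow> sublist s w \<Longrightarrow> s \<noteq> [] \<Longrightarrow>
     box_lo b w \<le> box_lo b s \<and> box_hi b s \<le> box_hi b w"
  by (simp add: well_contained_list_def)

lemma well_contained_list_bounds: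
  assumes "0 \<le> b" "well_contained_list b w" "x \<in> set w"
  shows "box_lo b w \<le> x" "x \<le> box_hi b w"
proof -
  obtain ps ss where "w = ps @ [x] @ ss"
    using split_list[OF assms(3)] by auto
  then have "box_lo b w \<le> box_lo b [x]" "box_hi b [x] \<le> box_hi b w"
    using well_contained_list_sublistD[OF assms(2)] by (metis not_Cons_self2 sublist_appendI)+
  then show "box_lo b w \<le> x" "x \<le> box_hi b w"
    using assms(1) by (simp_all add: box_lo_def box_hi_def mean_def)
qed

lemma box_append_covers:
  assumes "u \<noteq> []" "v \<noteq> []" "mean u \<le> mean v" "box_lo b v \<le> box_hi b u"
  shows "box_lo b (u @ v) \<le> box_lo b u" "box_lo b (u @ v) \<le> box_lo b v"
    and "box_hi b u \<le> box_hi b (u @ v)" "box_hi b v \<le> box_hi b (u @ v)"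
  using weighted_mean_box_covers[of "length u" "length v" "mean u" "mean v" b] assms
  unfolding box_lo_append box_hi_append by (simp_all add: box_lo_def box_hi_def)

lemma box_append_straddling:
  assumes u: "well_contained_list b u" and v: "well_contained_list b v"
    and "mean u \<le> mean v" "box_lo b v \<le> box_hi b u"
    and s: "suffix s1 u" "prefix s2 v" "s1 \<noteq> []" "s2 \<noteq> []"
  shows "box_lo b (u @ v) \<le> box_lo b (s1 @ s2) \<and> box_hi b (s1 @ s2) \<le> box_hi b (u @ v)"
proof -
  have "length s1 \<le> length u" "length s2 \<le> length v"
    using s(1,2) by (simp_all add: suffix_length_le prefix_length_le)
  moreover have "box_lo b u \<le> box_lo b s1 \<and> box_hi b s1 \<le> box_hi b u"
    "box_lo b v \<le> box_lo b s2 \<and> box_hi b s2 \<le> box_hi b v"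
    using u v s by (simp_all add: well_contained_list_sublistD)
  ultimately show ?thesis
    unfolding box_lo_append box_hi_append
    using s(3,4) assms(3,4)
    by (intro conjI weighted_mean_box_lower_mono weighted_mean_box_upper_mono)
      (simp_all add: box_lo_def box_hi_def)
qed

lemma well_contained_list_append:
  assumes u: "well_contained_list b u" and v: "well_contained_list b v"
    and sorted: "sorted (u @ v)" and overlap: "box_lo b v \<le> box_hi b u"
  shows "well_contained_list b (u @ v)"
proof -
  have "u \<noteq> []" "v \<noteq> []"
    using u v by (simp_all add: well_contained_list_def)
  then have "mean u \<le> mean v"
    using sorted mean_le_mean[of u v] by (simp add: sorted_append)
  note cover = box_append_covers[OF \<open>u \<noteq> []\<close> \<open>v \<noteq> []\<close> this overlap]
  have "box_lo b (u @ v) \<le> box_lo b s \<and> box_hi b s \<le> box_hi b (u @ v)"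
    if s: "sublist s (u @ v)" and "s \<noteq> []" for s
  proof -
    consider "sublist s u" | "sublist s v"
      | s1 s2 where "s = s1 @ s2" "suffix s1 u" "prefix s2 v" "s1 \<noteq> []" "s2 \<noteq> []"
      using s unfolding sublist_append
      by (metis append.right_neutral append_Nil prefix_imp_sublist suffix_imp_sublist)
    then show ?thesis
    proof cases
      case 1
      then show ?thesis
        using cover(1,3) well_contained_list_sublistD[OF u _ that(2)] by fastforce
    next
      case 2
      then show ?thesis
        using cover(2,4) well_contained_list_sublistD[OF v _ that(2)] by fastforce
    next
      case 3
      then show ?thesis
        using box_append_straddling[OF u v \<open>mean u \<le> mean v\<close> overlap] by simp
    qed
  qed
  then show ?thesis
    using \<open>u \<noteq> []\<close> by (simp add: well_contained_list_def)
qed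

definition block_decomposition :: "real \<Rightarrow> real list list \<Rightarrow> bool" where
  "block_decomposition b ws \<longleftrightarrow>
     (\<forall>w\<in>set ws. well_contained_list b w) \<and> sorted_wrt (\<lambda>u v. box_hi b u < box_lo b v) ws"

lemma block_decomposition_Cons:
  "block_decomposition b (v # vs) \<longleftrightarrow>
     well_contained_list b v \<and> (\<forall>w\<in>set vs. box_hi b v < box_lo b w) \<and> block_decomposition b vs"
  by (auto simp: block_decomposition_def)

lemma exists_block_decomposition_coarsening:
  assumes "0 \<le> b" "sorted (concat ws)" "\<forall>w\<in>set ws. well_contained_list b w"
  shows "\<exists>vs. concat vs = concat ws \<and> block_decomposition b vs"
  using assms(2,3)
proof (induction "length ws" arbitrary: ws rule: less_induct)
  case less
  show ?case
  proof (cases "\<exists>us u v vs. ws = us @ u # v # vs \<and> box_lo b v \<le> box_hi b u")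
    case True
    then obtain us u v vs where ws: "ws = us @ u # v # vs" and overlap: "box_lo b v \<le> box_hi b u"
      by blast
    have "sorted (u @ v)"
      using less.prems(1) by (simp add: ws sorted_append)
    then have "well_contained_list b (u @ v)"
      using less.prems(2) overlap by (intro well_contained_list_append) (simp_all add: ws)
    then obtain vs' where "concat vs' = concat (us @ (u @ v) # vs)" "block_decomposition b vs'"
      using less.prems less.hyps[of "us @ (u @ v) # vs"] by (auto simp: ws)
    then show ?thesis
      by (auto simp: ws)
  next
    case False
    have "transp (\<lambda>u v. box_hi b u < box_lo b v)"
      using box_lo_le_box_hi[OF assms(1)] by (intro transpI) (meson le_less_trans less_trans)
    moreover have "box_hi b (ws ! i) < box_lo b (ws ! Suc i)" if "Suc i < length ws" for i
      using False id_take_nth_drop[of i ws] that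
      by (metis Cons_nth_drop_Suc Suc_lessD not_le)
    ultimately have "sorted_wrt (\<lambda>u v. box_hi b u < box_lo b v) ws"
      by (simp add: sorted_wrt_iff_nth_Suc_transp)
    then show ?thesis
      using less.prems(2) by (auto simp: block_decomposition_def)
  qed
qed

lemma exists_block_decomposition:
  assumes "0 \<le> b" "sorted xs"
  shows "\<exists>ws. concat ws = xs \<and> block_decomposition b ws"
proof -
  have "concat (map (\<lambda>x. [x]) xs) = xs"
    by (induction xs) simp_all
  then show ?thesis
    using exists_block_decomposition_coarsening[OF assms(1), of "map (\<lambda>x. [x]) xs"] assms(2)
    by (simp add: well_contained_list_singleton)
qed

lemma box_lo_append_gt:
  assumes "u \<noteq> []" "s \<noteq> []" "box_hi b u < box_lo b s"
  shows "box_lo b u < box_lo b (u @ s)"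
  using weighted_mean_box_lower_gt[of "length u" "length s" "mean u" b "mean s"] assms
  unfolding box_lo_append by (simp add: box_lo_def box_hi_def)

lemma block_decomposition_prefix_box_lo:
  assumes "block_decomposition b (v # vs)" "prefix r (concat (v # vs))" "r \<noteq> []"
  shows "box_lo b v \<le> box_lo b r"
  using assms
proof (induction vs arbitrary: v r)
  case Nil
  then show ?case
    by (simp add: block_decomposition_Cons well_contained_list_sublistD)
next
  case (Cons v' vs)
  have v: "well_contained_list b v" and sep: "box_hi b v < box_lo b v'"
    using Cons.prems(1) by (simp_all add: block_decomposition_Cons)
  from Cons.prems(2) consider "prefix r v" | us where "r = v @ us" "prefix us (concat (v' # vs))"
    by (auto simp: prefix_append)
  then show ?case
  proof cases
    case 1
    then show ?thesis
      using v Cons.prems(3) by (simp add: well_contained_list_sublistD)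
  next
    case 2
    show ?thesis
    proof (cases "us = []")
      case False
      then have "box_lo b v' \<le> box_lo b us"
        using Cons.IH[of v' us] Cons.prems(1) 2(2) by (simp add: block_decomposition_Cons)
      then have "box_lo b v < box_lo b r"
        using box_lo_append_gt[of v us b] v False sep 2(1)
        by (simp add: well_contained_list_def)
      then show ?thesis by simp
    qed (simp add: 2)
  qed
qed

lemma well_contained_prefix_length_le:
  assumes dec: "block_decomposition b (u # us)" and w: "well_contained_list b w"
    and prefix: "prefix w (concat (u # us))"
  shows "length w \<le> length u"
proof (rule ccontr)
  assume longer: "\<not> length w \<le> length u"
  then obtain r where r: "w = u @ r" "r \<noteq> []" "prefix r (concat us)"
    using prefix prefix_length_le by (fastforce simp: prefix_append)
  then obtain v vs where us: "us = v # vs"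
    by (cases us) auto
  have "box_lo b v \<le> box_lo b r"
    using dec r(2,3) by (intro block_decomposition_prefix_box_lo) (simp_all add: us block_decomposition_Cons)
  moreover have "u \<noteq> []" "box_hi b u < box_lo b v"
    using dec by (simp_all add: us block_decomposition_Cons well_contained_list_def)
  ultimately have "box_lo b u < box_lo b w"
    using box_lo_append_gt[of u r b] r(1,2) by simp
  moreover have "box_lo b w \<le> box_lo b u"
    using w r(1) \<open>u \<noteq> []\<close> by (simp add: well_contained_list_sublistD)
  ultimately show False by simp
qed

lemma block_decomposition_unique:
  "block_decomposition b vs \<Longrightarrow> block_decomposition b ws \<Longrightarrow> concat vs = concat ws \<Longrightarrow> vs = ws"
proof (induction vs arbitrary: ws)
  case Nil
  then show ?case
    by (cases ws) (simp_all add: block_decomposition_Cons well_contained_list_def)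
next
  case (Cons u vs)
  then obtain w ws' where ws: "ws = w # ws'"
    by (cases ws) (simp_all add: block_decomposition_Cons well_contained_list_def)
  have eq: "u @ concat vs = w @ concat ws'"
    using Cons.prems(3) ws by simp
  have "length w \<le> length u"
    using Cons.prems(1,2) ws prefixI[OF eq]
    by (intro well_contained_prefix_length_le[of b u vs]) (simp_all add: block_decomposition_Cons)
  moreover have "length u \<le> length w"
    using Cons.prems(1,2) ws prefixI[OF eq[symmetric]]
    by (intro well_contained_prefix_length_le[of b w ws']) (simp_all add: block_decomposition_Cons)
  ultimately have "u = w" "concat vs = concat ws'"
    using eq by (simp_all add: append_eq_append_conv)
  then show ?case
    using Cons.IH Cons.prems ws by (simp add: block_decomposition_Cons)
qed

lemma sorted_concat_block_decomposition:
  assumes "0 \<le> b" "block_decomposition b ws" "\<forall>w\<in>set ws. sorted w"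
  shows "sorted (concat ws)"
  using assms(2,3)
proof (induction ws)
  case (Cons w ws)
  have "x \<le> y" if "x \<in> set w" "w' \<in> set ws" "y \<in> set w'" for x y w'
  proof -
    have "x \<le> box_hi b w" "box_lo b w' \<le> y"
      using well_contained_list_bounds[OF assms(1)] Cons.prems(1) that
      by (auto simp: block_decomposition_Cons block_decomposition_def)
    moreover have "box_hi b w < box_lo b w'"
      using Cons.prems(1) that(2) by (simp add: block_decomposition_Cons)
    ultimately show ?thesis by simp
  qed
  then show ?case
    using Cons by (auto simp: sorted_append block_decomposition_Cons)
qed simp

lemma sorted_concat_imp_sorted:
  assumes "sorted (concat ws)" "w \<in> set ws"
  shows "sorted w"
proof -
  obtain us vs where "ws = us @ w # vs"
    using split_list[OF assms(2)] by blast
  then show ?thesis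
    using assms(1) by (simp add: sorted_append)
qed

lemma Bz_eq: "Bz b z = {box_lo b (sorted_list_of_multiset z) .. box_hi b (sorted_list_of_multiset z)}"
  using Bz_mset[of b "sorted_list_of_multiset z"] by simp

lemma consecutive_subsets_eq:
  "consecutive_subsets z = {mset s |s. sublist s (sorted_list_of_multiset z) \<and> s \<noteq> []}"
proof -
  define xs where "xs = sorted_list_of_multiset z"
  have len: "size z = length xs"
    by (simp add: xs_def flip: size_mset)
  have "m \<in> consecutive_subsets z \<longleftrightarrow> (\<exists>s. m = mset s \<and> sublist s xs \<and> s \<noteq> [])" for m
  proof
    assume "m \<in> consecutive_subsets z"
    then obtain p q where "m = mset (take (q - p + 1) (drop p xs))" "p \<le> q" "q < length xs"
      by (auto simp: consecutive_subsets_def xs_def len)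
    moreover have "sublist (take (q - p + 1) (drop p xs)) xs"
      by (rule sublist_order.order.trans[OF sublist_take sublist_drop])
    ultimately show "\<exists>s. m = mset s \<and> sublist s xs \<and> s \<noteq> []"
      by auto
  next
    assume "\<exists>s. m = mset s \<and> sublist s xs \<and> s \<noteq> []"
    then obtain ps x s' ss where "m = mset (x # s')" "xs = ps @ (x # s') @ ss"
      by (auto simp: sublist_def neq_Nil_conv)
    then show "m \<in> consecutive_subsets z"
      unfolding consecutive_subsets_def xs_def[symmetric] len
      by (intro CollectI exI[of _ "length ps"] exI[of _ "length ps + length s'"]) auto
  qed
  then show ?thesis
    by (auto simp: xs_def)
qed

lemma well_contained_iff_list:
  assumes "0 \<le> b"
  shows "z \<noteq> {#} \<and> well_contained b z \<longleftrightarrow> well_contained_list b (sorted_list_of_multiset z)"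
proof -
  let ?xs = "sorted_list_of_multiset z"
  have "Bz b (mset s) \<subseteq> Bz b z \<longleftrightarrow> box_lo b ?xs \<le> box_lo b s \<and> box_hi b s \<le> box_hi b ?xs" for s
    using box_lo_le_box_hi[OF assms, of s] unfolding Bz_mset Bz_eq[of b z] by auto
  moreover have "z \<noteq> {#} \<longleftrightarrow> ?xs \<noteq> []"
    by (metis mset_sorted_list_of_multiset mset_zero_iff_right)
  ultimately show ?thesis
    by (auto simp: well_contained_def well_contained_list_def consecutive_subsets_eq)
qed

lemma interval_less_atLeastAtMost_iff:
  fixes a b c d :: real
  shows "a \<le> b \<Longrightarrow> c \<le> d \<Longrightarrow> interval_less {a..b} {c..d} \<longleftrightarrow> b < c"
  by (auto simp: interval_less_def)

lemma Bz_separated_iff: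
  assumes "0 \<le> b"
  shows "Bz b z \<inter> Bz b z' = {} \<and> interval_less (Bz b z) (Bz b z')
           \<longleftrightarrow> box_hi b (sorted_list_of_multiset z) < box_lo b (sorted_list_of_multiset z')"
  using box_lo_le_box_hi[OF assms] by (auto simp: Bz_eq interval_less_atLeastAtMost_iff)

lemma decomposition_iff_block_decomposition:
  assumes "0 \<le> b"
  shows "(sum_list zs = z
         \<and> (\<forall>zi \<in> set zs. zi \<noteq> {#} \<and> well_contained b zi)
         \<and> (\<forall>i j. i < j \<and> j < length zs \<longrightarrow>
                 Bz b (zs ! i) \<inter> Bz b (zs ! j) = {} \<and> interval_less (Bz b (zs ! i)) (Bz b (zs ! j))))
     \<longleftrightarrow> block_decomposition b (map sorted_list_of_multiset zs)
         \<and> concat (map sorted_list_of_multiset zs) = sorted_list_of_multiset z"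
proof -
  define ws where "ws = map sorted_list_of_multiset zs"
  have zs: "zs = map mset ws"
    by (simp add: ws_def comp_def)
  have blocks: "(\<forall>zi \<in> set zs. zi \<noteq> {#} \<and> well_contained b zi) \<longleftrightarrow> (\<forall>w\<in>set ws. well_contained_list b w)"
    by (simp add: ws_def well_contained_iff_list[OF assms])
  have separated: "(\<forall>i j. i < j \<and> j < length zs \<longrightarrow>
                 Bz b (zs ! i) \<inter> Bz b (zs ! j) = {} \<and> interval_less (Bz b (zs ! i)) (Bz b (zs ! j)))
      \<longleftrightarrow> sorted_wrt (\<lambda>u v. box_hi b u < box_lo b v) ws"
    by (auto simp: ws_def sorted_wrt_iff_nth_less Bz_separated_iff[OF assms])
  have "sum_list zs = z \<longleftrightarrow> concat ws = sorted_list_of_multiset z" if "block_decomposition b ws"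
  proof
    assume "sum_list zs = z"
    then have "mset (concat ws) = z"
      by (simp add: zs mset_concat)
    moreover have "sorted (concat ws)"
      using sorted_concat_block_decomposition[OF assms that] by (simp add: ws_def)
    ultimately show "concat ws = sorted_list_of_multiset z"
      by (metis sorted_list_of_multiset_mset sorted_sort_id)
  next
    assume "concat ws = sorted_list_of_multiset z"
    then show "sum_list zs = z"
      by (metis mset_concat mset_sorted_list_of_multiset zs)
  qed
  then show ?thesis
    using blocks separated unfolding block_decomposition_def ws_def by blast
qed

theorem lemma4p2:
  fixes b :: real and k :: nat and z :: "real multiset"
  assumes "b > 0" and "size z = k"
  shows "\<exists>!zs :: real multiset list.
           sum_list zs = z
         \<and> (\<forall>zi \<in> set zs. zi \<noteq> {#} \<and> well_contained b zi)
         \<and> (\<forall>i j. i < j \<and> j < length zs \<longrightarrow>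
                 Bz b (zs ! i) \<inter> Bz b (zs ! j) = {} \<and> interval_less (Bz b (zs ! i)) (Bz b (zs ! j)))"
proof -
  have b: "0 \<le> b"
    using assms(1) by simp
  obtain ws where ws: "block_decomposition b ws" "concat ws = sorted_list_of_multiset z"
    using exists_block_decomposition[OF b] by fastforce
  then have ws_sorted: "map sorted_list_of_multiset (map mset ws) = ws"
    using sorted_concat_imp_sorted[of ws] by (auto simp: sorted_sort_id intro!: map_idI)
  show ?thesis
    unfolding decomposition_iff_block_decomposition[OF b]
  proof (rule ex1I)
    show "block_decomposition b (map sorted_list_of_multiset (map mset ws))
        \<and> concat (map sorted_list_of_multiset (map mset ws)) = sorted_list_of_multiset z"
      using ws ws_sorted by simp
  next
    fix zs
    assume "block_decomposition b (map sorted_list_of_multiset zs)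
        \<and> concat (map sorted_list_of_multiset zs) = sorted_list_of_multiset z"
    then have "map sorted_list_of_multiset zs = ws"
      using block_decomposition_unique ws by metis
    then show "zs = map mset ws"
      by (auto simp: comp_def)
  qed
qed

end
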